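(* Let $(H,k,\chi)$ be an instance of Precoloring Extension with $H=(\{1,\dots,n\},F)$ having at least one edge and $\chi:V_0\to\{1,\dots,k\}$. Let $X=nk+1$; let $u_j=\chi(j)$, $\ell_j=\chi(j)$ for $j\in V_0$ and $u_j=k$, $\ell_j=1$ for $j\notin V_0$. Construct a $P_n\,|\,\mathrm{conc}\,|\,\sum C_j$ instance: jobs $1,\dots,n$ with $p_j=1$ and conflict graph initially $H$; for each $j\in\{1,\dots,n\}$, jobs $j(1),\dots,j(X)$ with processing time $X-u_j$, each in conflict with $j$, and for each $i\in\{1,\dots,X\}$ jobs $j(i,1),\dots,j(i,X)$ with processing time $u_j$, each in conflict with $j(i)$; for each $j\in V_0$ with $\chi(j)>1$, jobs $j^*(1),\dots,j^*(X)$ with processing time $\ell_j-1$, each in conflict with $j$ only. Let $K=\sum_{j=1}^n\big[(1+u_j)X^2+(\ell_j-1)X\big]+nk$. If the constructed instance has a minimal feasible schedule $C$ with $\sum_j C_j\le K$, then $(H,k,\chi)$ has a solution $\chi':\{1,\dots,n\}\to\{1,\dots,k\}$.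
   Context: Precoloring Extension: given a graph $H=(V,F)$, an integer $k$, and a proper coloring $\chi:V_0\to\{1,\dots,k\}$ of $H[V_0]$ for some $V_0\subseteq V$, a solution is a proper coloring $\chi':V\to\{1,\dots,k\}$ of $H$ with $\chi'(v)=\chi(v)$ for all $v\in V_0$. In $P_n\,|\,\mathrm{conc}\,|\,\sum C_j$, each job $j$ has integer processing time $p_j\ge1$ and release time $0$, and there is a conflict graph $G$ (the edges listed); a schedule assigning completion times $C_j\in\mathbb{N}$ is feasible if $C_j-p_j\ge0$ for all $j$ and $[C_i-p_i,C_i)\cap[C_j-p_j,C_j)=\emptyset$ for all conflicting pairs $\{i,j\}$; $\sum_j C_j$ is over all jobs. A feasible schedule is minimal if decreasing the completion time of any job by any positive amount makes it infeasible. *)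

theory Defs
  imports Main
begin

definition simple_graph :: "'a set \<Rightarrow> 'a set set \<Rightarrow> bool" where
  "simple_graph V F \<longleftrightarrow> (\<forall>e\<in>F. \<exists>a b. e = {a, b} \<and> a \<noteq> b \<and> a \<in> V \<and> b \<in> V)"

definition proper_coloring :: "'a set \<Rightarrow> 'a set set \<Rightarrow> nat \<Rightarrow> ('a \<Rightarrow> nat) \<Rightarrow> bool" where
  "proper_coloring V F k c \<longleftrightarrow>
     (\<forall>v\<in>V. c v \<in> {1..k}) \<and> (\<forall>a\<in>V. \<forall>b\<in>V. {a, b} \<in> F \<longrightarrow> c a \<noteq> c b)"

definition prext_instance :: "'a set \<Rightarrow> 'a set set \<Rightarrow> nat \<Rightarrow> 'a set \<Rightarrow> ('a \<Rightarrow> nat) \<Rightarrow> bool" where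
  "prext_instance V F k V0 chi \<longleftrightarrow>
     simple_graph V F \<and> V0 \<subseteq> V \<and> proper_coloring V0 {e\<in>F. e \<subseteq> V0} k chi"

definition prext_solution :: "'a set \<Rightarrow> 'a set set \<Rightarrow> nat \<Rightarrow> 'a set \<Rightarrow> ('a \<Rightarrow> nat) \<Rightarrow> ('a \<Rightarrow> nat) \<Rightarrow> bool" where
  "prext_solution V F k V0 chi chi' \<longleftrightarrow>
     proper_coloring V F k chi' \<and> (\<forall>v\<in>V0. chi' v = chi v)"

definition conc_feasible :: "'j set \<Rightarrow> ('j \<Rightarrow> nat) \<Rightarrow> 'j set set \<Rightarrow> ('j \<Rightarrow> nat) \<Rightarrow> bool" where
  "conc_feasible J p E C \<longleftrightarrow>
     (\<forall>j\<in>J. p j \<le> C j) \<and>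
     (\<forall>i\<in>J. \<forall>j\<in>J. {i, j} \<in> E \<longrightarrow> i \<noteq> j \<longrightarrow>
        {C i - p i ..< C i} \<inter> {C j - p j ..< C j} = {})"

definition conc_minimal :: "'j set \<Rightarrow> ('j \<Rightarrow> nat) \<Rightarrow> 'j set set \<Rightarrow> ('j \<Rightarrow> nat) \<Rightarrow> bool" where
  "conc_minimal J p E C \<longleftrightarrow>
     conc_feasible J p E C \<and> (\<forall>j\<in>J. \<forall>c < C j. \<not> conc_feasible J p E (C(j := c)))"

text \<open>Base j = job j; Aux j i = j(i); Leaf j i m = j(i,m); Star j i = j*(i).\<close>
datatype job = Base nat | Aux nat nat | Leaf nat nat nat | Star nat nat

definition redX :: "nat \<Rightarrow> nat \<Rightarrow> nat" where
  "redX n k = n * k + 1"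

definition red_u :: "nat \<Rightarrow> nat set \<Rightarrow> (nat \<Rightarrow> nat) \<Rightarrow> nat \<Rightarrow> nat" where
  "red_u k V0 chi j = (if j \<in> V0 then chi j else k)"

definition red_l :: "nat set \<Rightarrow> (nat \<Rightarrow> nat) \<Rightarrow> nat \<Rightarrow> nat" where
  "red_l V0 chi j = (if j \<in> V0 then chi j else 1)"

definition red_jobs :: "nat \<Rightarrow> nat \<Rightarrow> nat set \<Rightarrow> (nat \<Rightarrow> nat) \<Rightarrow> job set" where
  "red_jobs n k V0 chi =
     {Base j | j. j \<in> {1..n}}
   \<union> {Aux j i | j i. j \<in> {1..n} \<and> i \<in> {1..redX n k}}
   \<union> {Leaf j i m | j i m. j \<in> {1..n} \<and> i \<in> {1..redX n k} \<and> m \<in> {1..redX n k}}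
   \<union> {Star j i | j i. j \<in> V0 \<and> chi j > 1 \<and> i \<in> {1..redX n k}}"

fun red_p :: "nat \<Rightarrow> nat \<Rightarrow> nat set \<Rightarrow> (nat \<Rightarrow> nat) \<Rightarrow> job \<Rightarrow> nat" where
  "red_p n k V0 chi (Base j) = 1"
| "red_p n k V0 chi (Aux j i) = redX n k - red_u k V0 chi j"
| "red_p n k V0 chi (Leaf j i m) = red_u k V0 chi j"
| "red_p n k V0 chi (Star j i) = red_l V0 chi j - 1"

definition red_E :: "nat set set \<Rightarrow> job set set" where
  "red_E F =
     {{Base a, Base b} | a b. {a, b} \<in> F}
   \<union> {{Base j, Aux j i} | j i. True}
   \<union> {{Aux j i, Leaf j i m} | j i m. True}
   \<union> {{Base j, Star j i} | j i. True}"

definition red_K :: "nat \<Rightarrow> nat \<Rightarrow> nat set \<Rightarrow> (nat \<Rightarrow> nat) \<Rightarrow> nat" where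
  "red_K n k V0 chi =
     (\<Sum>j = 1..n. (1 + red_u k V0 chi j) * (redX n k)^2 + (red_l V0 chi j - 1) * redX n k) + n * k"

end

theory Submission
  imports Defs
begin

text \<open>Each vertex j owns a family of jobs (its base job, the auxiliary jobs j(i) with their
  leaves, and the stars j*(i)) whose total completion time is at least
  (1 + u j) X^2 + (l j - 1) X, and at least X more unless the base job completes at a
  time in [l j, u j]: completing late but by X keeps every auxiliary job from its unique
  cheapest position [u j, X), completing early pushes every star job back. As K exceeds the
  sum of these bounds by only n k < X, every base job completes inside its window, and the
  completion times of the unit base jobs form a precoloring extension.\<close>

lemma length_lt_completion_if_avoids_slot:
  fixes q c t :: nat
  assumes "q \<le> c" "t < q" "t \<notin> {c - q..<c}"
  shows "q < c"
  using assms by (cases "q = c") auto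

lemma hub_and_leaves_cost:
  fixes X u a :: nat and M :: "'m set" and c :: "'m \<Rightarrow> nat"
  assumes X: "2 * u < X" "card M = X"
    and hub: "X - u \<le> a"
    and leaves: "\<And>m. m \<in> M \<Longrightarrow> u \<le> c m"
    and disj: "\<And>m. m \<in> M \<Longrightarrow> {c m - u..<c m} \<inter> {a - (X - u)..<a} = {}"
  shows "X * (1 + u) \<le> a + sum c M"
    and "a \<noteq> X \<Longrightarrow> X * (1 + u) < a + sum c M"
proof -
  have leaves_sum: "X * u \<le> sum c M"
    using sum_mono[of M "\<lambda>_. u" c] leaves X by auto
  have early_hub: "X * (1 + u) < a + sum c M" if "a < X"
  proof -
    obtain m0 where m0: "m0 \<in> M" using X by fastforce
    \<comment> \<open>the hub starts before time u, so no leaf fits in front of it\<close>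
    have "a + u \<le> c m0"
    proof (rule ccontr)
      assume "\<not> a + u \<le> c m0"
      then have "max (a - (X - u)) (c m0 - u) \<in> {c m0 - u..<c m0} \<inter> {a - (X - u)..<a}"
        using that hub X(1) leaves[OF m0] by auto
      then show False using disj[OF m0] by blast
    qed
    moreover have "(X - 1) * u \<le> sum c (M - {m0})"
      using sum_mono[of "M - {m0}" "\<lambda>_. u" c] leaves X m0 by (auto simp: card_Diff_singleton)
    moreover have "sum c M = c m0 + sum c (M - {m0})"
      using X m0 by (metis card.infinite not_less_zero sum.remove)
    moreover have "(X - 1) * u + u = X * u"
      using X(1) by (cases X) simp_all
    ultimately have "a + X * u \<le> sum c M"
      by linarith
    then show ?thesis using hub X(1) by (simp add: algebra_simps)
  qed
  show "X * (1 + u) \<le> a + sum c M"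
    using early_hub leaves_sum by (cases "a < X") (auto simp: algebra_simps)
  show "X * (1 + u) < a + sum c M" if "a \<noteq> X"
    using early_hub leaves_sum that by (cases "a < X") (auto simp: algebra_simps)
qed

locale reduction_schedule =
  fixes n k :: nat and F :: "nat set set" and V0 :: "nat set" and chi :: "nat \<Rightarrow> nat"
    and C :: "job \<Rightarrow> nat"
  assumes prext: "prext_instance {1..n} F k V0 chi"
    and edge: "F \<noteq> {}"
    and feasible: "conc_feasible (red_jobs n k V0 chi) (red_p n k V0 chi) (red_E F) C"
begin

abbreviation "X \<equiv> redX n k"
abbreviation "u \<equiv> red_u k V0 chi"
abbreviation "l \<equiv> red_l V0 chi"
abbreviation "J \<equiv> red_jobs n k V0 chi"
abbreviation "p \<equiv> red_p n k V0 chi"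

lemma simple_H: "simple_graph {1..n} F"
  and V0_subset: "V0 \<subseteq> {1..n}"
  and chi_range: "v \<in> V0 \<Longrightarrow> chi v \<in> {1..k}"
  using prext by (auto simp: prext_instance_def proper_coloring_def)

lemma two_le_n: "2 \<le> n"
proof -
  obtain e where "e \<in> F" using edge by blast
  then obtain a b where "a \<noteq> b" "a \<in> {1..n}" "b \<in> {1..n}"
    using simple_H by (auto simp: simple_graph_def)
  then show ?thesis by auto
qed

lemma u_le_k: "u j \<le> k"
  using chi_range by (auto simp: red_u_def)

lemma two_u_less_X: "2 * u j < X"
proof -
  have "2 * k \<le> n * k" using two_le_n by (rule mult_right_mono) simp
  then show ?thesis using u_le_k[of j] unfolding redX_def by linarith
qed

lemma one_le_l: "1 \<le> l j"
  using chi_range by (auto simp: red_l_def)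

lemma jobs_mem:
  "j \<in> {1..n} \<Longrightarrow> Base j \<in> J"
  "j \<in> {1..n} \<Longrightarrow> i \<in> {1..X} \<Longrightarrow> Aux j i \<in> J"
  "j \<in> {1..n} \<Longrightarrow> i \<in> {1..X} \<Longrightarrow> m \<in> {1..X} \<Longrightarrow> Leaf j i m \<in> J"
  "j \<in> V0 \<Longrightarrow> 1 < chi j \<Longrightarrow> i \<in> {1..X} \<Longrightarrow> Star j i \<in> J"
  by (auto simp: red_jobs_def)

lemma conflicts:
  "{a, b} \<in> F \<Longrightarrow> {Base a, Base b} \<in> red_E F"
  "{Aux j i, Base j} \<in> red_E F"
  "{Leaf j i m, Aux j i} \<in> red_E F"
  "{Star j i, Base j} \<in> red_E F"
  by (auto simp: red_E_def insert_commute)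

lemma length_le_completion: "x \<in> J \<Longrightarrow> p x \<le> C x"
  using feasible by (simp add: conc_feasible_def)

lemma conflict_disjoint:
  "x \<in> J \<Longrightarrow> y \<in> J \<Longrightarrow> {x, y} \<in> red_E F \<Longrightarrow> x \<noteq> y \<Longrightarrow>
    {C x - p x..<C x} \<inter> {C y - p y..<C y} = {}"
  using feasible by (simp add: conc_feasible_def)

lemma one_le_base_completion: "j \<in> {1..n} \<Longrightarrow> 1 \<le> C (Base j)"
  using length_le_completion[OF jobs_mem(1)] by simp

lemma aux_gadget_cost:
  assumes j: "j \<in> {1..n}" and i: "i \<in> {1..X}"
  shows "X * (1 + u j) \<le> C (Aux j i) + (\<Sum>m=1..X. C (Leaf j i m))"
    and "u j < C (Base j) \<Longrightarrow> C (Base j) \<le> X \<Longrightarrow>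
      X * (1 + u j) < C (Aux j i) + (\<Sum>m=1..X. C (Leaf j i m))"
proof -
  note aux = jobs_mem(2)[OF j i] and leaf = jobs_mem(3)[OF j i]
  have hub: "X - u j \<le> C (Aux j i)"
    using length_le_completion[OF aux] by (simp add: red_u_def)
  have leaves: "u j \<le> C (Leaf j i m)" if "m \<in> {1..X}" for m
    using length_le_completion[OF leaf[OF that]] by (simp add: red_u_def)
  have disj: "{C (Leaf j i m) - u j..<C (Leaf j i m)} \<inter> {C (Aux j i) - (X - u j)..<C (Aux j i)} = {}"
    if "m \<in> {1..X}" for m
    using conflict_disjoint[OF leaf[OF that] aux conflicts(3)] by (simp add: red_u_def)
  note cost = hub_and_leaves_cost[where M = "{1..X}" and c = "\<lambda>m. C (Leaf j i m)",
      OF two_u_less_X _ hub leaves disj, simplified]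
  show "X * (1 + u j) \<le> C (Aux j i) + (\<Sum>m=1..X. C (Leaf j i m))"
    using cost(1) by simp
  assume "u j < C (Base j)" "C (Base j) \<le> X"
  moreover have "{C (Aux j i) - (X - u j)..<C (Aux j i)} \<inter> {C (Base j) - 1..<C (Base j)} = {}"
    using conflict_disjoint[OF aux jobs_mem(1)[OF j] conflicts(2)] by (simp add: red_u_def)
  \<comment> \<open>an auxiliary job completing at X would occupy exactly the slots u j, ..., X - 1\<close>
  ultimately have "C (Aux j i) \<noteq> X" by auto
  then show "X * (1 + u j) < C (Aux j i) + (\<Sum>m=1..X. C (Leaf j i m))"
    using cost(2) by simp
qed

definition aux_cost :: "nat \<Rightarrow> nat" where
  "aux_cost j = (\<Sum>i=1..X. C (Aux j i) + (\<Sum>m=1..X. C (Leaf j i m)))"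

lemma aux_cost_ge:
  assumes j: "j \<in> {1..n}"
  shows "(1 + u j) * X\<^sup>2 \<le> aux_cost j"
    and "u j < C (Base j) \<Longrightarrow> C (Base j) \<le> X \<Longrightarrow> (1 + u j) * X\<^sup>2 + X \<le> aux_cost j"
proof -
  have "(\<Sum>i=1..X. X * (1 + u j)) \<le> aux_cost j"
    unfolding aux_cost_def by (intro sum_mono aux_gadget_cost(1)[OF j])
  then show "(1 + u j) * X\<^sup>2 \<le> aux_cost j"
    by (simp add: power2_eq_square algebra_simps)
  assume late: "u j < C (Base j)" "C (Base j) \<le> X"
  have "(\<Sum>i=1..X. X * (1 + u j) + 1) \<le> aux_cost j"
    unfolding aux_cost_def using aux_gadget_cost(2)[OF j _ late]
    by (intro sum_mono) (simp add: Suc_le_eq)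
  then show "(1 + u j) * X\<^sup>2 + X \<le> aux_cost j"
    by (simp add: power2_eq_square algebra_simps)
qed

definition star_cost :: "nat \<Rightarrow> nat" where
  "star_cost j = (if j \<in> V0 \<and> 1 < chi j then \<Sum>i=1..X. C (Star j i) else 0)"

lemma star_cost_ge:
  assumes j: "j \<in> {1..n}"
  shows "X * (l j - 1) \<le> star_cost j"
    and "C (Base j) < l j \<Longrightarrow> X * l j \<le> star_cost j"
proof -
  have "X * (l j - 1) \<le> star_cost j \<and> (C (Base j) < l j \<longrightarrow> X * l j \<le> star_cost j)"
  proof (cases "j \<in> V0 \<and> 1 < chi j")
    case False
    then have "l j = 1" using chi_range[of j] by (auto simp: red_l_def)
    then show ?thesis using one_le_base_completion[OF j] by simp
  next
    case True
    note star = jobs_mem(4)[OF conjunct1[OF True] conjunct2[OF True]]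
    have stars_ge: "l j - 1 \<le> C (Star j i)" if "i \<in> {1..X}" for i
      using length_le_completion[OF star[OF that]] by (simp add: red_l_def)
    \<comment> \<open>a star job completing at l j - 1 would cover the slot of an early base job\<close>
    have stars_gt: "l j - 1 < C (Star j i)" if "i \<in> {1..X}" "C (Base j) < l j" for i
    proof (rule length_lt_completion_if_avoids_slot[OF stars_ge[OF that(1)]])
      show "C (Base j) - 1 < l j - 1" using that(2) one_le_base_completion[OF j] by linarith
      have "{C (Star j i) - (l j - 1)..<C (Star j i)} \<inter> {C (Base j) - 1..<C (Base j)} = {}"
        using conflict_disjoint[OF star[OF that(1)] jobs_mem(1)[OF j] conflicts(4)]
        by (simp add: red_l_def)
      then show "C (Base j) - 1 \<notin> {C (Star j i) - (l j - 1)..<C (Star j i)}"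
        using one_le_base_completion[OF j] by auto
    qed
    have "X * (l j - 1) \<le> (\<Sum>i=1..X. C (Star j i))"
      using sum_mono[of "{1..X}" "\<lambda>_. l j - 1", OF stars_ge] by simp
    moreover have "X * l j \<le> (\<Sum>i=1..X. C (Star j i))" if early: "C (Base j) < l j"
    proof -
      have "l j \<le> C (Star j i)" if "i \<in> {1..X}" for i
        using stars_gt[OF that early] by linarith
      then show ?thesis using sum_mono[of "{1..X}" "\<lambda>_. l j"] by simp
    qed
    ultimately show ?thesis using True by (simp add: star_cost_def)
  qed
  then show "X * (l j - 1) \<le> star_cost j" "C (Base j) < l j \<Longrightarrow> X * l j \<le> star_cost j"
    by simp_all
qed

definition family_cost :: "nat \<Rightarrow> nat" where
  "family_cost j = C (Base j) + aux_cost j + star_cost j"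

definition family_bound :: "nat \<Rightarrow> nat" where
  "family_bound j = (1 + u j) * X\<^sup>2 + (l j - 1) * X"

lemma family_cost_ge:
  assumes j: "j \<in> {1..n}"
  shows "family_bound j \<le> family_cost j"
  using aux_cost_ge(1)[OF j] star_cost_ge(1)[OF j]
  by (simp add: family_bound_def family_cost_def mult.commute)

lemma family_cost_ge_outside_window:
  assumes j: "j \<in> {1..n}" and outside: "\<not> (l j \<le> C (Base j) \<and> C (Base j) \<le> u j)"
  shows "family_bound j + X \<le> family_cost j"
proof -
  consider "C (Base j) < l j" | "u j < C (Base j)" "C (Base j) \<le> X" | "X < C (Base j)"
    using outside by linarith
  then show ?thesis
  proof cases
    case 1
    have "X * l j = (l j - 1) * X + X" using one_le_l[of j] by (cases "l j") simp_all
    then show ?thesis using aux_cost_ge(1)[OF j] star_cost_ge(2)[OF j 1]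
      by (simp add: family_bound_def family_cost_def)
  next
    case 2
    then show ?thesis using aux_cost_ge(2)[OF j] star_cost_ge(1)[OF j]
      by (simp add: family_bound_def family_cost_def mult.commute)
  next
    case 3
    then show ?thesis using aux_cost_ge(1)[OF j] star_cost_ge(1)[OF j]
      by (simp add: family_bound_def family_cost_def mult.commute)
  qed
qed

lemma total_cost: "(\<Sum>x\<in>J. C x) = (\<Sum>j=1..n. family_cost j)"
proof -
  define N where "N = {1..n}"
  define I where "I = {1..X}"
  define V1 where "V1 = {j \<in> V0. 1 < chi j}"
  define Auxs where "Auxs = (\<lambda>(j, i). Aux j i) ` (N \<times> I)"
  define Leaves where "Leaves = (\<lambda>(j, i, m). Leaf j i m) ` (N \<times> I \<times> I)"
  define Stars where "Stars = (\<lambda>(j, i). Star j i) ` (V1 \<times> I)"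
  have V1_N: "V1 \<subseteq> N" using V0_subset by (auto simp: V1_def N_def)
  have fin: "finite N" "finite I" "finite V1"
    using V1_N by (auto simp: N_def I_def intro: finite_subset)
  have jobs_eq: "J = ((Base ` N \<union> Auxs) \<union> Leaves) \<union> Stars"
    unfolding red_jobs_def Auxs_def Leaves_def Stars_def N_def I_def V1_def
    by (auto simp: image_iff)
  have "(\<Sum>x\<in>J. C x) =
      (\<Sum>x\<in>Base ` N. C x) + (\<Sum>x\<in>Auxs. C x) + (\<Sum>x\<in>Leaves. C x) + (\<Sum>x\<in>Stars. C x)"
    unfolding jobs_eq using fin
    by (subst sum.union_disjoint; (auto simp: Auxs_def Leaves_def Stars_def)?)+
  also have "(\<Sum>x\<in>Base ` N. C x) = (\<Sum>j\<in>N. C (Base j))"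
    by (simp add: sum.reindex inj_on_def)
  also have "(\<Sum>x\<in>Auxs. C x) = (\<Sum>j\<in>N. \<Sum>i\<in>I. C (Aux j i))"
    unfolding Auxs_def
    by (subst sum.reindex) (auto simp: inj_on_def sum.cartesian_product split_beta)
  also have "(\<Sum>x\<in>Leaves. C x) = (\<Sum>j\<in>N. \<Sum>i\<in>I. \<Sum>m\<in>I. C (Leaf j i m))"
    unfolding Leaves_def
    by (subst sum.reindex) (auto simp: inj_on_def sum.cartesian_product split_beta)
  also have "(\<Sum>x\<in>Stars. C x) = (\<Sum>j\<in>V1. \<Sum>i\<in>I. C (Star j i))"
    unfolding Stars_def
    by (subst sum.reindex) (auto simp: inj_on_def sum.cartesian_product split_beta)
  also have "\<dots> = (\<Sum>j\<in>N. star_cost j)"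
    using fin V1_N by (simp add: star_cost_def sum.If_cases Int_absorb1 Int_commute V1_def I_def)
  finally show ?thesis
    by (simp add: family_cost_def aux_cost_def sum.distrib N_def I_def)
qed

lemma base_completion_in_window:
  assumes cost: "(\<Sum>x\<in>J. C x) \<le> red_K n k V0 chi" and j: "j \<in> {1..n}"
  shows "l j \<le> C (Base j) \<and> C (Base j) \<le> u j"
proof (rule ccontr)
  assume "\<not> ?thesis"
  then have "family_bound j + X \<le> family_cost j"
    by (rule family_cost_ge_outside_window[OF j])
  moreover have "(\<Sum>i\<in>{1..n} - {j}. family_bound i) \<le> (\<Sum>i\<in>{1..n} - {j}. family_cost i)"
    by (intro sum_mono family_cost_ge) auto
  ultimately have "(\<Sum>i=1..n. family_bound i) + X \<le> (\<Sum>i=1..n. family_cost i)"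
    using j by (simp add: sum.remove)
  moreover have "red_K n k V0 chi = (\<Sum>i=1..n. family_bound i) + n * k"
    by (simp add: red_K_def family_bound_def)
  ultimately show False
    using cost total_cost by (simp add: redX_def)
qed

lemma base_completions_solve:
  assumes cost: "(\<Sum>x\<in>J. C x) \<le> red_K n k V0 chi"
  shows "prext_solution {1..n} F k V0 chi (\<lambda>j. C (Base j))"
  unfolding prext_solution_def proper_coloring_def
proof (intro conjI ballI impI)
  fix v assume v: "v \<in> {1..n}"
  show "C (Base v) \<in> {1..k}"
    using base_completion_in_window[OF cost v] one_le_l[of v] u_le_k[of v] by simp
next
  fix a b assume a: "a \<in> {1..n}" and b: "b \<in> {1..n}" and ab: "{a, b} \<in> F"
  have "a \<noteq> b" using simple_H ab by (auto simp: simple_graph_def doubleton_eq_iff)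
  then show "C (Base a) \<noteq> C (Base b)"
    using conflict_disjoint[OF jobs_mem(1)[OF a] jobs_mem(1)[OF b] conflicts(1)[OF ab]]
      one_le_base_completion[OF a]
    by auto
next
  fix v assume v: "v \<in> V0"
  then show "C (Base v) = chi v"
    using base_completion_in_window[OF cost] V0_subset
    by (force simp: red_l_def red_u_def)
qed

end

theorem lemma14:
  fixes n k :: nat and F :: "nat set set" and V0 :: "nat set" and chi :: "nat \<Rightarrow> nat"
    and C :: "job \<Rightarrow> nat"
  assumes inst: "prext_instance {1..n} F k V0 chi"
    and edge: "F \<noteq> {}"
    and minC: "conc_minimal (red_jobs n k V0 chi) (red_p n k V0 chi) (red_E F) C"
    and sumC: "(\<Sum>j\<in>red_jobs n k V0 chi. C j) \<le> red_K n k V0 chi"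
  shows "\<exists>chi'. prext_solution {1..n} F k V0 chi chi'"
proof -
  have "conc_feasible (red_jobs n k V0 chi) (red_p n k V0 chi) (red_E F) C"
    using minC by (simp add: conc_minimal_def)
  then interpret reduction_schedule n k F V0 chi C
    using inst edge by (intro reduction_schedule.intro)
  show ?thesis using base_completions_solve[OF sumC] by blast
qed

end
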